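(* Let $\alpha\in[1,2]$, $\varepsilon\in\mathbb{R}$, $T>0$, and let $U^n_\varepsilon\in V_N$ be the approximate solution at the $n$-th step of the fully discrete scheme \[ (U^{n+1}_\varepsilon,\phi)=(U^n_\varepsilon,\phi)-6\Delta t\left(U^{n+\frac12}_\varepsilon(U^{n+\frac12}_\varepsilon)_x,\phi\right)+\varepsilon^2\Delta t\left(\mathcal{D}^\alpha(U^{n+\frac12}_\varepsilon)_x,\phi\right)\ \ \forall\phi\in V_N,\qquad U^{n+\frac12}_\varepsilon=\tfrac{U^n_\varepsilon+U^{n+1}_\varepsilon}{2}. \] Suppose $(n+1)\Delta t\le T$, and let $\{v^\ell\}_{\ell\ge0}\subset V_N$ be defined by $v^0=U^n_\varepsilon$ and, for $\ell\ge0$, \[ (v^{\ell+1},\phi)=(U^n_\varepsilon,\phi)-\Delta t\left(\mathcal{B}\Big(\tfrac{U^n_\varepsilon+v^\ell}{2}\Big),\phi\right)+\tfrac12\varepsilon^2\Delta t\left(\mathcal{D}^\alpha(U^n_\varepsilon+v^{\ell+1})_x,\phi\right)\quad\forall\phi\in V_N, \] where $\mathcal{B}(v)=6vv_x$. Assume that $\Delta t$ satisfies \[ 6N\Delta t\le\frac{\zeta}{\eta\|U^n_\varepsilon\|_{1+\alpha}}, \] where $\zeta\in(0,1)$ and $\eta=\frac{8-\zeta}{1-\zeta}>8$. Then the sequence $\{v^\ell\}_{\ell\ge0}$ converges, $\lim_{\ell\to\infty}v^\ell=U^{n+1}_\varepsilon$, and \[ \|U^{n+1}_\varepsilon\|_{1+\alpha}\le\eta\|U^n_\varepsilon\|_{1+\alpha}.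 \]
   Context: $I=[-\pi,\pi]$; functions are $2\pi$-periodic. $(u,v)=\int_I u\bar v\,dx$. For $f\in L^2(I)$, $\hat f(k)=\frac{1}{2\pi}\int_I f(x)e^{-ikx}dx$. For $r\ge0$, $\|f\|_r=\left(\sum_{k\in\mathbb{Z}}(1+|k|^2)^r|\hat f(k)|^2\right)^{1/2}$. $V_N$ is the space of real-valued trigonometric polynomials spanned by $\{e^{ikx}:-N\le k\le N\}$, and $\mathcal{D}^\alpha f=\sum_{k}|k|^\alpha\hat f(k)e^{ikx}$. *)

theory Defs
  imports "HOL-Analysis.Analysis"
begin

text \<open>Functions are real-valued functions on the reals (2pi-periodic ones in practice);
  I = [-pi, pi].\<close>

definition l2inner :: "(real \<Rightarrow> real) \<Rightarrow> (real \<Rightarrow> real) \<Rightarrow> real" where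
  "l2inner u v = integral {-pi..pi} (\<lambda>x. u x * v x)"

definition fcoef :: "(real \<Rightarrow> real) \<Rightarrow> int \<Rightarrow> complex" where
  "fcoef f k = integral {-pi..pi} (\<lambda>x. complex_of_real (f x) * cis (- (of_int k * x)))
                / complex_of_real (2 * pi)"

definition sob_norm :: "real \<Rightarrow> (real \<Rightarrow> real) \<Rightarrow> real" where
  "sob_norm r f = sqrt (infsum (\<lambda>k::int. (1 + (of_int k)\<^sup>2) powr r * (cmod (fcoef f k))\<^sup>2) UNIV)"

definition VN :: "nat \<Rightarrow> (real \<Rightarrow> real) set" where
  "VN N = {f. \<exists>c :: int \<Rightarrow> complex. \<forall>x.
      complex_of_real (f x) = (\<Sum>k = - int N..int N. c k * cis (of_int k * x))}"

definition fracD :: "real \<Rightarrow> (real \<Rightarrow> real) \<Rightarrow> real \<Rightarrow> real" where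
  "fracD \<alpha> f x = Re (infsum (\<lambda>k::int. complex_of_real (\<bar>of_int k\<bar> powr \<alpha>) * fcoef f k
                                         * cis (of_int k * x)) UNIV)"

definition Bop :: "(real \<Rightarrow> real) \<Rightarrow> real \<Rightarrow> real" where
  "Bop v x = 6 * v x * deriv v x"

end

theory Submission
  imports Defs
begin

text \<open>
  Everything is done on Fourier coefficients.  Testing with \<open>cos k x\<close> and \<open>sin k x\<close> shows that a
  Galerkin identity on \<open>V\<^sub>N\<close> amounts to equality of the modes \<open>|k| \<le> N\<close>, and the
  coefficients of \<open>a a'\<close> are \<open>i k / 2\<close> times those of \<open>a\<^sup>2\<close>.  Hence, with
  \<open>a = (U\<^sup>n + v) / 2\<close>, the next iterate \<open>v'\<close> satisfies
  \<open>v'\<^sub>k (1 - i \<sigma>\<^sub>k) = U\<^sub>k (1 + i \<sigma>\<^sub>k) - 3 \<Delta>t i k (a * a)\<^sub>k\<close>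
  with real \<open>\<sigma>\<^sub>k\<close>; as \<open>|1 + i \<sigma>| = |1 - i \<sigma>| \<ge> 1\<close>, only the nonlinear term can
  increase a coefficient.

  For \<open>s = 1 + \<alpha> \<in> [2, 3]\<close> the weighted norm with weights \<open>(1 + k\<^sup>2)\<^sup>s\<close> satisfies
  \<open>\<parallel>a * b\<parallel>\<^sub>s \<le> 8 \<parallel>a\<parallel>\<^sub>s \<parallel>b\<parallel>\<^sub>s\<close>, and \<open>\<eta>\<close> is chosen so that
  \<open>\<zeta> (1 + \<eta>)\<^sup>2 \<le> \<eta> (\<eta> - 1)\<close>; with the step-size condition this keeps every iterate in the
  ball of radius \<open>\<eta> \<parallel>U\<^sup>n\<parallel>\<^sub>s\<close>.  On that ball, Young's inequality and
  \<open>(\<Sum>\<^sub>k |g\<^sub>k|)\<^sup>2 \<le> 2 \<parallel>g\<parallel>\<^sub>s\<^sup>2\<close> make the iteration a contraction with factor \<open>1/2\<close> in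
  \<open>l\<^sup>2\<close>.  So the iterates converge mode by mode, the limit is a fixed point, i.e. solves the
  scheme, and it inherits the bound.
\<close>

section \<open>Trigonometric polynomials and the space \<open>V\<^sub>N\<close>\<close>

definition trig_poly :: "nat \<Rightarrow> (int \<Rightarrow> complex) \<Rightarrow> real \<Rightarrow> complex" where
  "trig_poly N c x = (\<Sum>k = - int N..int N. c k * cis (of_int k * x))"

definition band_limited :: "nat \<Rightarrow> (int \<Rightarrow> complex) \<Rightarrow> bool" where
  "band_limited N c \<longleftrightarrow> (\<forall>k. int N < \<bar>k\<bar> \<longrightarrow> c k = 0)"

definition hermitian :: "(int \<Rightarrow> complex) \<Rightarrow> bool" where
  "hermitian c \<longleftrightarrow> (\<forall>k. c (- k) = cnj (c k))"

lemma has_vector_derivative_cis_int: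
  "((\<lambda>x. cis (of_int m * x)) has_vector_derivative (\<i> * of_int m * cis (of_int m * x))) (at x within S)"
proof -
  have "((\<lambda>x. cis (of_int m * x)) has_derivative
          (\<lambda>t. (of_int m * t) *\<^sub>R (\<i> * cis (of_int m * x)))) (at x within S)"
    by (intro has_derivative_cis derivative_intros)
  then show ?thesis
    unfolding has_vector_derivative_def by (simp add: scaleR_conv_of_real field_simps)
qed

lemma has_integral_cis_int:
  "((\<lambda>x. cis (of_int m * x)) has_integral (if m = 0 then of_real (2 * pi) else 0)) {-pi..pi}"
proof (cases "m = 0")
  case True
  then show ?thesis
    using has_integral_const_real[of "1::complex" "-pi" pi] by (simp add: scaleR_conv_of_real)
next
  case False
  define F where "F x = cis (of_int m * x) / (\<i> * of_int m)" for x
  have "(F has_vector_derivative (\<i> * of_int m * cis (of_int m * x)) / (\<i> * of_int m))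
          (at x within {-pi..pi})" for x
    unfolding F_def by (intro has_vector_derivative_divide has_vector_derivative_cis_int)
  then have "(F has_vector_derivative cis (of_int m * x)) (at x within {-pi..pi})" for x
    using False by simp
  then have "((\<lambda>x. cis (of_int m * x)) has_integral (F pi - F (-pi))) {-pi..pi}"
    by (intro fundamental_theorem_of_calculus) auto
  moreover have "sin (of_int m * pi) = 0"
    by (metis sin_npi_int mult.commute)
  then have "cis (of_int m * pi) = cis (of_int m * (-pi))"
    by (simp add: complex_eq_iff)
  then have "F pi = F (-pi)"
    by (simp add: F_def)
  ultimately show ?thesis
    using False by simp
qed

lemma has_integral_trig_poly_cis:
  "((\<lambda>x. trig_poly N c x * cis (- (of_int k * x))) has_integral
     (if \<bar>k\<bar> \<le> int N then of_real (2 * pi) * c k else 0)) {-pi..pi}"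
proof -
  have "((\<lambda>x. \<Sum>j = - int N..int N. c j * cis (of_int (j - k) * x)) has_integral
          (\<Sum>j = - int N..int N. c j * (if j - k = 0 then of_real (2 * pi) else 0))) {-pi..pi}"
    by (intro has_integral_sum finite_atLeastAtMost_int has_integral_mult_right has_integral_cis_int)
  moreover have "(\<Sum>j = - int N..int N. c j * (if j - k = 0 then of_real (2 * pi) else 0))
      = (if \<bar>k\<bar> \<le> int N then of_real (2 * pi) * c k else 0)"
    by (simp add: sum.delta abs_le_iff mult.commute if_distrib cong: if_cong)
  moreover have "trig_poly N c x * cis (- (of_int k * x))
      = (\<Sum>j = - int N..int N. c j * cis (of_int (j - k) * x))" for x
    unfolding trig_poly_def sum_distrib_right
    by (intro sum.cong refl) (simp add: cis_mult algebra_simps)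
  ultimately show ?thesis
    by simp
qed

lemma fcoef_trig_poly:
  assumes "\<And>x. of_real (f x) = trig_poly N c x"
  shows "fcoef f k = (if \<bar>k\<bar> \<le> int N then c k else 0)"
  using integral_unique[OF has_integral_trig_poly_cis[of N c k]]
  by (simp add: fcoef_def assms[symmetric])

lemma fcoef_trig_poly_band_limited:
  assumes "\<And>x. of_real (f x) = trig_poly N c x" and "band_limited N c"
  shows "fcoef f = c"
  using assms by (auto simp: fcoef_trig_poly band_limited_def not_le)

lemma hermitian_fcoef: "hermitian (fcoef f)"
  unfolding hermitian_def fcoef_def
  by (simp add: integral_cnj cis_cnj)

lemma trig_poly_cnj: "cnj (trig_poly N c x) = trig_poly N (\<lambda>k. cnj (c (- k))) x"
  unfolding trig_poly_def cnj_sum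
  by (rule sum.reindex_bij_witness[of _ uminus uminus]) (auto simp: cis_cnj)

lemma trig_poly_real:
  assumes "hermitian c"
  shows "of_real (Re (trig_poly N c x)) = trig_poly N c x"
proof -
  have "cnj (trig_poly N c x) = trig_poly N c x"
    using assms by (simp add: trig_poly_cnj hermitian_def)
  then show ?thesis
    by (metis Reals_cnj_iff Re_complex_of_real Reals_cases)
qed

lemma VN_I: "(\<And>x. of_real (f x) = trig_poly N c x) \<Longrightarrow> f \<in> VN N"
  unfolding VN_def trig_poly_def by auto

lemma trig_poly_fcoef_VN:
  assumes "f \<in> VN N"
  shows "of_real (f x) = trig_poly N (fcoef f) x"
proof -
  obtain c where c: "\<And>x. of_real (f x) = trig_poly N c x"
    using assms unfolding VN_def trig_poly_def by auto
  show ?thesis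
    unfolding c trig_poly_def fcoef_trig_poly[OF c] by (intro sum.cong) auto
qed

lemma band_limited_fcoef_VN:
  assumes "f \<in> VN N"
  shows "band_limited N (fcoef f)"
  unfolding band_limited_def using fcoef_trig_poly[OF trig_poly_fcoef_VN[OF assms]] by auto

lemma VN_eq_Re_trig_poly: "f \<in> VN N \<Longrightarrow> f = (\<lambda>x. Re (trig_poly N (fcoef f) x))"
  by (metis Re_complex_of_real trig_poly_fcoef_VN)

lemma continuous_on_VN: "f \<in> VN N \<Longrightarrow> continuous_on S f"
  by (subst VN_eq_Re_trig_poly) (auto simp: trig_poly_def intro!: continuous_intros)

lemma trig_poly_add: "trig_poly N (\<lambda>k. c k + d k) x = trig_poly N c x + trig_poly N d x"
  by (simp add: trig_poly_def sum.distrib distrib_right)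

lemma trig_poly_diff: "trig_poly N (\<lambda>k. c k - d k) x = trig_poly N c x - trig_poly N d x"
  by (simp add: trig_poly_def sum_subtractf left_diff_distrib)

lemma trig_poly_divide: "trig_poly N (\<lambda>k. c k / z) x = trig_poly N c x / z"
  by (simp add: trig_poly_def sum_divide_distrib)

lemma VN_add: "f \<in> VN N \<Longrightarrow> g \<in> VN N \<Longrightarrow> (\<lambda>x. f x + g x) \<in> VN N"
  by (rule VN_I[where c = "\<lambda>k. fcoef f k + fcoef g k"]) (simp add: trig_poly_add trig_poly_fcoef_VN)

lemma VN_diff: "f \<in> VN N \<Longrightarrow> g \<in> VN N \<Longrightarrow> (\<lambda>x. f x - g x) \<in> VN N"
  by (rule VN_I[where c = "\<lambda>k. fcoef f k - fcoef g k"]) (simp add: trig_poly_diff trig_poly_fcoef_VN)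

lemma VN_divide: "f \<in> VN N \<Longrightarrow> (\<lambda>x. f x / c) \<in> VN N"
  by (rule VN_I[where c = "\<lambda>k. fcoef f k / of_real c"]) (simp add: trig_poly_divide trig_poly_fcoef_VN)

lemma has_vector_derivative_trig_poly:
  "(trig_poly N c has_vector_derivative trig_poly N (\<lambda>k. \<i> * of_int k * c k) x) (at x within S)"
proof -
  have "((\<lambda>x. \<Sum>k = - int N..int N. c k * cis (of_int k * x)) has_vector_derivative
          (\<Sum>k = - int N..int N. c k * (\<i> * of_int k * cis (of_int k * x)))) (at x within S)"
    by (intro has_vector_derivative_sum has_vector_derivative_mult_right
        has_vector_derivative_cis_int)
  then show ?thesis
    unfolding trig_poly_def[abs_def] by (simp add: algebra_simps)
qed

lemma VN_deriv:
  assumes "f \<in> VN N"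
  shows "deriv f \<in> VN N" and "fcoef (deriv f) = (\<lambda>k. \<i> * of_int k * fcoef f k)"
proof -
  define c where "c = fcoef f"
  have real: "of_real (Re (trig_poly N (\<lambda>k. \<i> * of_int k * c k) x))
      = trig_poly N (\<lambda>k. \<i> * of_int k * c k) x" for x
    using hermitian_fcoef[of f] by (intro trig_poly_real) (simp add: hermitian_def c_def)
  have "((\<lambda>x. Re (trig_poly N c x)) has_real_derivative Re (trig_poly N (\<lambda>k. \<i> * of_int k * c k) x))
          (at x)" for x
    using bounded_linear.has_vector_derivative[OF bounded_linear_Re has_vector_derivative_trig_poly]
    by (simp add: has_real_derivative_iff_has_vector_derivative)
  then have "deriv f x = Re (trig_poly N (\<lambda>k. \<i> * of_int k * c k) x)" for x
    using VN_eq_Re_trig_poly[OF assms] DERIV_imp_deriv unfolding c_def by metis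
  then have repr: "of_real (deriv f x) = trig_poly N (\<lambda>k. \<i> * of_int k * c k) x" for x
    using real by simp
  show "deriv f \<in> VN N"
    using repr by (rule VN_I)
  show "fcoef (deriv f) = (\<lambda>k. \<i> * of_int k * fcoef f k)"
    using band_limited_fcoef_VN[OF assms] repr
    by (intro fcoef_trig_poly_band_limited) (auto simp: band_limited_def c_def)
qed

lemma VN_fracD:
  assumes "f \<in> VN N"
  shows "fracD \<alpha> f \<in> VN N" and "fcoef (fracD \<alpha> f) = (\<lambda>k. of_real (\<bar>of_int k\<bar> powr \<alpha>) * fcoef f k)"
proof -
  define c where "c k = of_real (\<bar>of_int k\<bar> powr \<alpha>) * fcoef f k" for k
  have "infsum (\<lambda>k. c k * cis (of_int k * x)) UNIV = trig_poly N c x" for x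
    using band_limited_fcoef_VN[OF assms]
    by (subst infsum_cong_neutral[where T = "{- int N..int N}"])
       (auto simp: trig_poly_def c_def band_limited_def)
  then have "fracD \<alpha> f x = Re (trig_poly N c x)" for x
    by (simp add: fracD_def c_def)
  moreover have "of_real (Re (trig_poly N c x)) = trig_poly N c x" for x
    using hermitian_fcoef[of f] by (intro trig_poly_real) (simp add: hermitian_def c_def)
  ultimately have repr: "of_real (fracD \<alpha> f x) = trig_poly N c x" for x
    by simp
  show "fracD \<alpha> f \<in> VN N"
    using repr by (rule VN_I)
  show "fcoef (fracD \<alpha> f) = (\<lambda>k. of_real (\<bar>of_int k\<bar> powr \<alpha>) * fcoef f k)"
    using band_limited_fcoef_VN[OF assms] repr
    by (intro fcoef_trig_poly_band_limited) (auto simp: band_limited_def c_def[abs_def])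
qed

text \<open>For band-limited \<open>a\<close> the sum below is the full discrete convolution of \<open>a\<close> and \<open>b\<close>.\<close>

definition conv :: "nat \<Rightarrow> (int \<Rightarrow> complex) \<Rightarrow> (int \<Rightarrow> complex) \<Rightarrow> int \<Rightarrow> complex" where
  "conv N a b k = (\<Sum>j = - int N..int N. a j * b (k - j))"

lemma trig_poly_mult:
  assumes "band_limited N d"
  shows "trig_poly N c x * trig_poly N d x = trig_poly (2 * N) (conv N c d) x"
proof -
  have shift: "(\<Sum>k = - int (2 * N)..int (2 * N). d (k - j) * cis (of_int k * x))
      = (\<Sum>m = - int N..int N. d m * cis (of_int (m + j) * x))" if "j \<in> {- int N..int N}" for j
  proof -
    have "(\<Sum>k = - int (2 * N)..int (2 * N). d (k - j) * cis (of_int k * x))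
        = (\<Sum>k = j - int N..j + int N. d (k - j) * cis (of_int k * x))"
      using that assms by (intro sum.mono_neutral_right) (auto simp: band_limited_def)
    also have "\<dots> = (\<Sum>m = - int N..int N. d m * cis (of_int (m + j) * x))"
      by (rule sum.reindex_bij_witness[of _ "\<lambda>m. m + j" "\<lambda>k. k - j"]) auto
    finally show ?thesis .
  qed
  have "trig_poly (2 * N) (conv N c d) x
      = (\<Sum>j = - int N..int N. c j * (\<Sum>k = - int (2 * N)..int (2 * N). d (k - j) * cis (of_int k * x)))"
    unfolding trig_poly_def conv_def sum_distrib_right sum_distrib_left
    by (subst sum.swap) (simp add: mult.assoc)
  also have "\<dots> = (\<Sum>j = - int N..int N. c j * (\<Sum>m = - int N..int N. d m * cis (of_int (m + j) * x)))"
    by (rule sum.cong[OF refl], subst shift) auto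
  also have "\<dots> = trig_poly N c x * trig_poly N d x"
    unfolding trig_poly_def sum_product
    by (intro sum.cong refl) (simp add: sum_distrib_left cis_mult algebra_simps)
  finally show ?thesis
    by simp
qed

lemma fcoef_mult_VN:
  assumes "f \<in> VN N" and "g \<in> VN N"
  shows "fcoef (\<lambda>x. f x * g x) = conv N (fcoef f) (fcoef g)"
proof -
  have "of_real (f x * g x) = trig_poly (2 * N) (conv N (fcoef f) (fcoef g)) x" for x
    using trig_poly_mult[OF band_limited_fcoef_VN[OF assms(2)]] trig_poly_fcoef_VN assms by simp
  moreover have "band_limited (2 * N) (conv N (fcoef f) (fcoef g))"
    unfolding band_limited_def conv_def
  proof (intro allI impI sum.neutral ballI)
    fix k j
    assume "int (2 * N) < \<bar>k\<bar>" and "j \<in> {- int N..int N}"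
    then have "int N < \<bar>k - j\<bar>"
      by auto
    then show "fcoef f j * fcoef g (k - j) = 0"
      using band_limited_fcoef_VN[OF assms(2)] by (simp add: band_limited_def)
  qed
  ultimately show ?thesis
    by (rule fcoef_trig_poly_band_limited)
qed

lemma conv_reflect:
  assumes "band_limited N a" and "band_limited N b"
  shows "conv N a b k = (\<Sum>j = - int N..int N. a (k - j) * b j)"
proof -
  define R where "R = {- int N..int N}"
  define T where "T = {j \<in> R. k - j \<in> R}"
  have zero: "a j * b (k - j) = 0" if "j \<notin> R \<or> k - j \<notin> R" for j
    using that assms by (auto simp: band_limited_def R_def)
  have "conv N a b k = (\<Sum>j\<in>T. a j * b (k - j))"
    unfolding conv_def R_def[symmetric] by (intro sum.mono_neutral_right) (auto simp: T_def R_def zero)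
  also have "\<dots> = (\<Sum>j\<in>T. a (k - j) * b j)"
    by (rule sum.reindex_bij_witness[of _ "\<lambda>j. k - j" "\<lambda>j. k - j"]) (auto simp: T_def)
  also have "\<dots> = (\<Sum>j\<in>R. a (k - j) * b j)"
    using zero[of "k - _"] by (intro sum.mono_neutral_left) (auto simp: T_def R_def)
  finally show ?thesis
    unfolding R_def .
qed

lemma conv_commute:
  assumes "band_limited N a" and "band_limited N b"
  shows "conv N a b = conv N b a"
  using conv_reflect[OF assms] by (auto simp: conv_def mult.commute)

lemma conv_deriv:
  assumes "band_limited N a"
  shows "conv N a (\<lambda>j. \<i> * of_int j * a j) k = \<i> * of_int k / 2 * conv N a a k"
proof -
  have band: "band_limited N (\<lambda>j. \<i> * of_int j * a j)"
    using assms by (simp add: band_limited_def)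
  have "2 * conv N a (\<lambda>j. \<i> * of_int j * a j) k
      = conv N a (\<lambda>j. \<i> * of_int j * a j) k + (\<Sum>j = - int N..int N. a (k - j) * (\<i> * of_int j * a j))"
    using conv_reflect[OF assms band] by simp
  also have "\<dots> = \<i> * of_int k * conv N a a k"
    unfolding conv_def sum.distrib[symmetric] sum_distrib_left
    by (intro sum.cong refl) (simp add: algebra_simps)
  finally show ?thesis
    by (simp add: field_simps)
qed

lemma conv_diff_square:
  assumes "band_limited N a" and "band_limited N b"
  shows "conv N a a k - conv N b b k = conv N (\<lambda>j. a j - b j) (\<lambda>j. a j + b j) k"
  using fun_cong[OF conv_commute[OF assms], of k]
  by (simp add: conv_def algebra_simps sum.distrib sum_subtractf)

lemma fcoef_mult_deriv_VN:
  assumes "f \<in> VN N"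
  shows "fcoef (\<lambda>x. f x * deriv f x) k = \<i> * of_int k / 2 * conv N (fcoef f) (fcoef f) k"
  using fcoef_mult_VN[OF assms VN_deriv(1)[OF assms]] conv_deriv[OF band_limited_fcoef_VN[OF assms]]
  by (simp add: VN_deriv(2)[OF assms])

section \<open>Galerkin identities in Fourier variables\<close>

lemma fcoef_add:
  assumes "continuous_on {-pi..pi} f" and "continuous_on {-pi..pi} g"
  shows "fcoef (\<lambda>x. f x + g x) k = fcoef f k + fcoef g k"
  unfolding fcoef_def add_divide_distrib[symmetric]
  by (subst integral_add[symmetric])
     (auto simp: distrib_right intro!: integrable_continuous_interval continuous_intros assms)

lemma fcoef_diff:
  assumes "continuous_on {-pi..pi} f" and "continuous_on {-pi..pi} g"
  shows "fcoef (\<lambda>x. f x - g x) k = fcoef f k - fcoef g k"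
  unfolding fcoef_def diff_divide_distrib[symmetric]
  by (subst integral_diff[symmetric])
     (auto simp: left_diff_distrib intro!: integrable_continuous_interval continuous_intros assms)

lemma fcoef_cmult: "fcoef (\<lambda>x. c * f x) k = of_real c * fcoef f k"
  by (simp add: fcoef_def mult.assoc)

lemma fcoef_divide: "fcoef (\<lambda>x. f x / c) k = fcoef f k / of_real c"
  by (simp add: fcoef_def)

lemma fcoef_add_VN: "f \<in> VN N \<Longrightarrow> g \<in> VN N \<Longrightarrow> fcoef (\<lambda>x. f x + g x) = (\<lambda>j. fcoef f j + fcoef g j)"
  by (simp add: fun_eq_iff fcoef_add continuous_on_VN)

lemma fcoef_midpoint_VN:
  "f \<in> VN N \<Longrightarrow> g \<in> VN N \<Longrightarrow> fcoef (\<lambda>x. (f x + g x) / 2) = (\<lambda>j. (fcoef f j + fcoef g j) / 2)"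
  by (simp add: fun_eq_iff fcoef_divide fcoef_add continuous_on_VN)

lemma l2inner_add:
  assumes "continuous_on {-pi..pi} f" and "continuous_on {-pi..pi} g" and "continuous_on {-pi..pi} \<phi>"
  shows "l2inner (\<lambda>x. f x + g x) \<phi> = l2inner f \<phi> + l2inner g \<phi>"
  unfolding l2inner_def
  by (subst integral_add[symmetric])
     (auto simp: distrib_right intro!: integrable_continuous_interval continuous_intros assms)

lemma l2inner_diff:
  assumes "continuous_on {-pi..pi} f" and "continuous_on {-pi..pi} g" and "continuous_on {-pi..pi} \<phi>"
  shows "l2inner (\<lambda>x. f x - g x) \<phi> = l2inner f \<phi> - l2inner g \<phi>"
  unfolding l2inner_def
  by (subst integral_diff[symmetric])
     (auto simp: left_diff_distrib intro!: integrable_continuous_interval continuous_intros assms)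

lemma l2inner_cmult: "l2inner (\<lambda>x. c * f x) \<phi> = c * l2inner f \<phi>"
  by (simp add: l2inner_def mult.assoc)

lemma l2inner_Bop: "l2inner (Bop a) \<phi> = 6 * l2inner (\<lambda>x. a x * deriv a x) \<phi>"
  unfolding Bop_def l2inner_cmult[symmetric] by (simp add: mult.assoc)

lemma VN_Re_trig_poly: "(\<lambda>x. Re (trig_poly N c x)) \<in> VN N"
proof (rule VN_I)
  fix x
  have "of_real (Re (trig_poly N c x)) = (trig_poly N c x + cnj (trig_poly N c x)) / 2"
    by (simp add: complex_add_cnj)
  also have "\<dots> = trig_poly N (\<lambda>k. (c k + cnj (c (- k))) / 2) x"
    unfolding trig_poly_cnj
    by (simp add: trig_poly_def sum.distrib sum_divide_distrib[symmetric] algebra_simps)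
  finally show "of_real (Re (trig_poly N c x)) = trig_poly N (\<lambda>k. (c k + cnj (c (- k))) / 2) x" .
qed

lemma trig_poly_single:
  "\<bar>k\<bar> \<le> int N \<Longrightarrow> trig_poly N (\<lambda>j. if j = k then z else 0) x = z * cis (of_int k * x)"
  unfolding trig_poly_def
  by (subst sum.cong[OF refl, where h = "\<lambda>j. if j = k then z * cis (of_int k * x) else 0"])
     (auto simp: abs_le_iff)

lemma cos_VN: "\<bar>k\<bar> \<le> int N \<Longrightarrow> (\<lambda>x. cos (of_int k * x)) \<in> VN N"
  using VN_Re_trig_poly[of N "\<lambda>j. if j = k then 1 else 0"] by (simp add: trig_poly_single)

lemma sin_VN: "\<bar>k\<bar> \<le> int N \<Longrightarrow> (\<lambda>x. sin (of_int k * x)) \<in> VN N"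
  using VN_Re_trig_poly[of N "\<lambda>j. if j = k then - \<i> else 0"] by (simp add: trig_poly_single)

lemma fcoef_l2inner_cos_sin:
  assumes "continuous_on {-pi..pi} g"
  shows "of_real (2 * pi) * fcoef g k
      = of_real (l2inner g (\<lambda>x. cos (of_int k * x))) - \<i> * of_real (l2inner g (\<lambda>x. sin (of_int k * x)))"
proof -
  have "((\<lambda>x. g x * cos (of_int k * x)) has_integral l2inner g (\<lambda>x. cos (of_int k * x))) {-pi..pi}"
    and "((\<lambda>x. g x * sin (of_int k * x)) has_integral l2inner g (\<lambda>x. sin (of_int k * x))) {-pi..pi}"
    unfolding l2inner_def
    by (intro integrable_integral integrable_continuous_interval continuous_intros assms)+
  then have "((\<lambda>x. of_real (g x * cos (of_int k * x)) - \<i> * of_real (g x * sin (of_int k * x))) has_integral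
      (of_real (l2inner g (\<lambda>x. cos (of_int k * x))) - \<i> * of_real (l2inner g (\<lambda>x. sin (of_int k * x)))))
      {-pi..pi}"
    by (intro has_integral_diff has_integral_mult_right has_integral_of_real)
  moreover have "of_real (g x * cos t) - \<i> * of_real (g x * sin t) = of_real (g x) * cis (- t)" for x t
    by (simp add: complex_eq_iff)
  ultimately show ?thesis
    unfolding fcoef_def by (simp add: integral_unique)
qed

lemma l2inner_VN:
  assumes "continuous_on {-pi..pi} g" and "\<phi> \<in> VN N"
  shows "of_real (l2inner g \<phi>) = of_real (2 * pi) * (\<Sum>j = - int N..int N. fcoef \<phi> j * fcoef g (- j))"
proof -
  have "((\<lambda>x. of_real (g x) * cis (- (of_int (- j) * x))) has_integral of_real (2 * pi) * fcoef g (- j))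
          {-pi..pi}" for j
    unfolding fcoef_def
    by (simp add: integrable_integral integrable_continuous_interval continuous_intros assms(1))
  then have "((\<lambda>x. \<Sum>j = - int N..int N. fcoef \<phi> j * (of_real (g x) * cis (- (of_int (- j) * x))))
      has_integral (\<Sum>j = - int N..int N. fcoef \<phi> j * (of_real (2 * pi) * fcoef g (- j)))) {-pi..pi}"
    by (intro has_integral_sum finite_atLeastAtMost_int has_integral_mult_right)
  moreover have "(\<Sum>j = - int N..int N. fcoef \<phi> j * (of_real (g x) * cis (- (of_int (- j) * x))))
      = of_real (g x * \<phi> x)" for x
    unfolding of_real_mult trig_poly_fcoef_VN[OF assms(2)] trig_poly_def sum_distrib_left
    by (intro sum.cong refl) (simp add: algebra_simps)
  moreover have "((\<lambda>x. complex_of_real (g x * \<phi> x)) has_integral of_real (l2inner g \<phi>)) {-pi..pi}"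
    unfolding l2inner_def
    by (intro has_integral_of_real integrable_integral integrable_continuous_interval continuous_intros
        assms(1) continuous_on_VN[OF assms(2)])
  ultimately show ?thesis
    by (simp add: has_integral_unique sum_distrib_left algebra_simps)
qed

lemma galerkin_iff_fcoef_eq:
  assumes f: "continuous_on {-pi..pi} f" and g: "continuous_on {-pi..pi} g"
  shows "(\<forall>\<phi>\<in>VN N. l2inner f \<phi> = l2inner g \<phi>) \<longleftrightarrow> (\<forall>k. \<bar>k\<bar> \<le> int N \<longrightarrow> fcoef f k = fcoef g k)"
proof safe
  fix k :: int
  assume "\<forall>\<phi>\<in>VN N. l2inner f \<phi> = l2inner g \<phi>" and "\<bar>k\<bar> \<le> int N"
  then have "of_real (2 * pi) * fcoef f k = of_real (2 * pi) * fcoef g k"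
    unfolding fcoef_l2inner_cos_sin[OF f] fcoef_l2inner_cos_sin[OF g] by (simp add: cos_VN sin_VN)
  then show "fcoef f k = fcoef g k"
    by simp
next
  fix \<phi>
  assume "\<forall>k. \<bar>k\<bar> \<le> int N \<longrightarrow> fcoef f k = fcoef g k" and "\<phi> \<in> VN N"
  then have "of_real (l2inner f \<phi>) = (of_real (l2inner g \<phi>) :: complex)"
    unfolding l2inner_VN[OF f \<open>\<phi> \<in> VN N\<close>] l2inner_VN[OF g \<open>\<phi> \<in> VN N\<close>]
    by (intro arg_cong2[where f = "(*)"] sum.cong) auto
  then show "l2inner f \<phi> = l2inner g \<phi>"
    by simp
qed

lemma galerkin_scheme_iff_fcoef:
  assumes U: "U \<in> VN N" and a: "a \<in> VN N" and b: "b \<in> VN N" and w: "w \<in> VN N"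
  shows "(\<forall>\<phi>\<in>VN N. l2inner w \<phi> = l2inner U \<phi> - \<tau> * l2inner (\<lambda>x. a x * deriv a x) \<phi>
                              + \<kappa> * l2inner (deriv (fracD \<alpha> b)) \<phi>)
     \<longleftrightarrow> (\<forall>k. \<bar>k\<bar> \<le> int N \<longrightarrow> fcoef w k = fcoef U k
                - of_real \<tau> * (\<i> * of_int k / 2 * conv N (fcoef a) (fcoef a) k)
                + of_real \<kappa> * (\<i> * of_int k * of_real (\<bar>of_int k\<bar> powr \<alpha>) * fcoef b k))"
proof -
  define P where "P = (\<lambda>x. a x * deriv a x)"
  define Q where "Q = deriv (fracD \<alpha> b)"
  define R where "R = (\<lambda>x. U x - \<tau> * P x + \<kappa> * Q x)"
  have Q: "Q \<in> VN N"
    unfolding Q_def by (intro VN_deriv VN_fracD b)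
  have cont: "continuous_on {-pi..pi} U" "continuous_on {-pi..pi} P" "continuous_on {-pi..pi} Q"
    "continuous_on {-pi..pi} w"
    unfolding P_def
    by (intro continuous_intros continuous_on_VN[OF U] continuous_on_VN[OF a] continuous_on_VN[OF Q]
        continuous_on_VN[OF w] continuous_on_VN[OF VN_deriv(1)[OF a]])+
  have l2inner_R: "l2inner R \<phi> = l2inner U \<phi> - \<tau> * l2inner P \<phi> + \<kappa> * l2inner Q \<phi>"
    if "\<phi> \<in> VN N" for \<phi>
    using continuous_on_VN[OF that] cont
    by (simp add: R_def l2inner_add l2inner_diff l2inner_cmult continuous_intros)
  have fcoef_R: "fcoef R k = fcoef U k
      - of_real \<tau> * (\<i> * of_int k / 2 * conv N (fcoef a) (fcoef a) k)
      + of_real \<kappa> * (\<i> * of_int k * of_real (\<bar>of_int k\<bar> powr \<alpha>) * fcoef b k)" for k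
    using cont
    by (simp add: R_def fcoef_add fcoef_diff fcoef_cmult continuous_intros P_def
        fcoef_mult_deriv_VN[OF a] Q_def VN_deriv(2)[OF VN_fracD(1)[OF b]] VN_fracD(2)[OF b] mult.assoc)
  have "continuous_on {-pi..pi} R"
    unfolding R_def using cont by (intro continuous_intros)
  then have "(\<forall>\<phi>\<in>VN N. l2inner w \<phi> = l2inner R \<phi>) \<longleftrightarrow> (\<forall>k. \<bar>k\<bar> \<le> int N \<longrightarrow> fcoef w k = fcoef R k)"
    by (rule galerkin_iff_fcoef_eq[OF cont(4)])
  then show ?thesis
    unfolding P_def[symmetric] Q_def[symmetric] fcoef_R by (simp add: l2inner_R cong: ball_cong)
qed

section \<open>Weighted coefficient norms and the convolution estimates\<close>

definition sobolev_weight :: "real \<Rightarrow> int \<Rightarrow> real" where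
  "sobolev_weight s k = (1 + (of_int k)\<^sup>2) powr s"

definition coeff_norm :: "real \<Rightarrow> nat \<Rightarrow> (int \<Rightarrow> complex) \<Rightarrow> real" where
  "coeff_norm s N c = sqrt (\<Sum>k = - int N..int N. sobolev_weight s k * (cmod (c k))\<^sup>2)"

lemma sobolev_weight_pos: "0 < sobolev_weight s k"
proof -
  have "0 < 1 + (of_int k :: real)\<^sup>2"
    by (intro add_pos_nonneg) auto
  then show ?thesis
    unfolding sobolev_weight_def by simp
qed

lemma sobolev_weight_0 [simp]: "sobolev_weight 0 k = 1"
proof -
  have "0 < 1 + (of_int k :: real)\<^sup>2"
    by (intro add_pos_nonneg) auto
  then show ?thesis
    unfolding sobolev_weight_def by simp
qed

lemma sob_norm_VN:
  assumes "f \<in> VN N"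
  shows "sob_norm r f = coeff_norm r N (fcoef f)"
proof -
  have "infsum (\<lambda>k. sobolev_weight r k * (cmod (fcoef f k))\<^sup>2) UNIV
      = infsum (\<lambda>k. sobolev_weight r k * (cmod (fcoef f k))\<^sup>2) {- int N..int N}"
    using band_limited_fcoef_VN[OF assms] by (intro infsum_cong_neutral) (auto simp: band_limited_def)
  then show ?thesis
    by (simp add: sob_norm_def coeff_norm_def sobolev_weight_def)
qed

lemma coeff_norm_nonneg: "0 \<le> coeff_norm s N c"
  unfolding coeff_norm_def by (simp add: sum_nonneg less_imp_le[OF sobolev_weight_pos])

lemma coeff_norm_sq: "(coeff_norm s N c)\<^sup>2 = (\<Sum>k = - int N..int N. sobolev_weight s k * (cmod (c k))\<^sup>2)"
  unfolding coeff_norm_def by (simp add: sum_nonneg less_imp_le[OF sobolev_weight_pos])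

lemma coeff_norm_L2_set:
  "coeff_norm s N c = L2_set (\<lambda>k. sqrt (sobolev_weight s k) * cmod (c k)) {- int N..int N}"
  unfolding coeff_norm_def L2_set_def
  by (simp add: power_mult_distrib less_imp_le[OF sobolev_weight_pos])

lemma coeff_norm_le_lincomb:
  assumes "0 \<le> p" and "0 \<le> r"
    and "\<And>k. \<bar>k\<bar> \<le> int N \<Longrightarrow> cmod (z k) \<le> p * cmod (u k) + r * cmod (w k)"
  shows "coeff_norm s N z \<le> p * coeff_norm s N u + r * coeff_norm s N w"
proof -
  define \<omega> where "\<omega> k = sqrt (sobolev_weight s k)" for k
  have \<omega>: "0 \<le> \<omega> k" for k
    by (simp add: \<omega>_def less_imp_le[OF sobolev_weight_pos])
  have "coeff_norm s N z
      \<le> L2_set (\<lambda>k. p * (\<omega> k * cmod (u k)) + r * (\<omega> k * cmod (w k))) {- int N..int N}"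
    unfolding coeff_norm_L2_set \<omega>_def[symmetric]
  proof (rule L2_set_mono)
    fix k :: int
    assume "k \<in> {- int N..int N}"
    then have "\<omega> k * cmod (z k) \<le> \<omega> k * (p * cmod (u k) + r * cmod (w k))"
      using assms(3) \<omega> by (intro mult_left_mono) auto
    then show "\<omega> k * cmod (z k) \<le> p * (\<omega> k * cmod (u k)) + r * (\<omega> k * cmod (w k))"
      by (simp add: algebra_simps)
  qed (simp add: \<omega>)
  also have "\<dots> \<le> p * coeff_norm s N u + r * coeff_norm s N w"
    using L2_set_triangle_ineq
    unfolding coeff_norm_L2_set \<omega>_def[symmetric] L2_set_right_distrib[OF assms(1)]
      L2_set_right_distrib[OF assms(2)] .
  finally show ?thesis .
qed

lemma norm_le_coeff_norm_0:
  assumes "\<bar>k\<bar> \<le> int N"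
  shows "cmod (c k) \<le> coeff_norm 0 N c"
proof -
  have "(cmod (c k))\<^sup>2 \<le> (\<Sum>j = - int N..int N. (cmod (c j))\<^sup>2)"
    using assms by (intro member_le_sum) auto
  then show ?thesis
    unfolding coeff_norm_def by (simp add: real_le_rsqrt)
qed

lemma tendsto_coeff_norm:
  "(\<And>k. (\<lambda>l. V l k) \<longlonglongrightarrow> W k) \<Longrightarrow> (\<lambda>l. coeff_norm s N (V l)) \<longlonglongrightarrow> coeff_norm s N W"
  unfolding coeff_norm_def by (intro tendsto_intros)

lemma inverse_sq_weight_le_telescoping:
  fixes m :: real
  assumes "1 \<le> m"
  shows "2 / (1 + m\<^sup>2)\<^sup>2 \<le> 1 / m - 1 / (m + 1)"
proof -
  have "(1 + m\<^sup>2)\<^sup>2 - 2 * (m * (m + 1)) = (m\<^sup>2 - 1)\<^sup>2 + 2 * m * (m - 1)"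
    by (simp add: power2_eq_square algebra_simps)
  moreover have "0 \<le> 2 * m * (m - 1)"
    using assms by simp
  ultimately have "2 * (m * (m + 1)) \<le> (1 + m\<^sup>2)\<^sup>2"
    by (smt (verit) zero_le_power2)
  moreover have "0 < 1 + m\<^sup>2"
    by (rule add_pos_nonneg) simp_all
  moreover have "1 / m - 1 / (m + 1) = 1 / (m * (m + 1))"
    using assms by (simp add: divide_simps)
  ultimately show ?thesis
    using assms by (simp add: divide_simps)
qed

lemma sum_inverse_sq_weight_le:
  "(\<Sum>k = - int N..int N. 1 / (1 + (of_int k)\<^sup>2)\<^sup>2 :: real) \<le> 2 - 1 / (real N + 1)"
proof (induction N)
  case (Suc N)
  define m where "m = real N + 1"
  have "{- int (Suc N)..int (Suc N)} = insert (int N + 1) (insert (- (int N + 1)) {- int N..int N})"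
    by auto
  moreover have "(- real N - 1)\<^sup>2 = m\<^sup>2"
    by (simp add: m_def power2_eq_square algebra_simps)
  ultimately have "(\<Sum>k = - int (Suc N)..int (Suc N). 1 / (1 + (of_int k)\<^sup>2)\<^sup>2 :: real)
      = 2 / (1 + m\<^sup>2)\<^sup>2 + (\<Sum>k = - int N..int N. 1 / (1 + (of_int k)\<^sup>2)\<^sup>2)"
    by (simp add: m_def)
  also have "\<dots> \<le> (1 / m - 1 / (m + 1)) + (2 - 1 / m)"
    using inverse_sq_weight_le_telescoping[of m] Suc.IH by (simp add: m_def)
  finally show ?case
    by (simp add: m_def add.commute)
qed simp

lemma sum_inverse_sq_weight_le_two:
  "(\<Sum>k = - int N..int N. 1 / (1 + (of_int k)\<^sup>2)\<^sup>2 :: real) \<le> 2"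
  using sum_inverse_sq_weight_le[of N] by (smt (verit) divide_nonneg_nonneg of_nat_0_le_iff)

lemma sum_shift_le:
  fixes f :: "int \<Rightarrow> real"
  assumes "finite R" and "\<And>m. 0 \<le> f m" and "\<And>m. m \<notin> R \<Longrightarrow> f m = 0" and "inj_on h R"
  shows "(\<Sum>x\<in>R. f (h x)) \<le> (\<Sum>m\<in>R. f m)"
proof -
  have "(\<Sum>x\<in>R. f (h x)) = (\<Sum>m\<in>h ` R. f m)"
    using sum.reindex[OF assms(4), of f] by simp
  also have "\<dots> = (\<Sum>m\<in>h ` R \<inter> R. f m)"
    using assms by (intro sum.mono_neutral_right) auto
  also have "\<dots> \<le> (\<Sum>m\<in>R. f m)"
    using assms by (intro sum_mono2) auto
  finally show ?thesis .
qed

lemma sum_conv_le: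
  fixes X Y :: "int \<Rightarrow> real"
  assumes "finite R" and "\<And>j. 0 \<le> X j" and "\<And>m. 0 \<le> Y m" and "\<And>m. m \<notin> R \<Longrightarrow> Y m = 0"
  shows "(\<Sum>k\<in>R. \<Sum>j\<in>R. X j * Y (k - j)) \<le> (\<Sum>j\<in>R. X j) * (\<Sum>m\<in>R. Y m)"
proof -
  have "(\<Sum>k\<in>R. \<Sum>j\<in>R. X j * Y (k - j)) = (\<Sum>j\<in>R. X j * (\<Sum>k\<in>R. Y (k - j)))"
    by (subst sum.swap) (simp add: sum_distrib_left)
  also have "\<dots> \<le> (\<Sum>j\<in>R. X j * (\<Sum>m\<in>R. Y m))"
    using assms by (intro sum_mono mult_left_mono sum_shift_le) (auto simp: inj_on_def)
  finally show ?thesis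
    by (simp add: sum_distrib_right)
qed

lemma powr_le_twice_square:
  fixes r s :: real
  assumes "0 < r" and "r \<le> 2" and "2 \<le> s" and "s \<le> 3"
  shows "r powr s \<le> 2 * r\<^sup>2"
proof (cases "1 \<le> r")
  case True
  then have "r powr s \<le> r powr 3"
    using assms by (intro powr_mono) auto
  also have "\<dots> = r * r\<^sup>2"
    using assms by (simp add: power2_eq_square power3_eq_cube)
  also have "\<dots> \<le> 2 * r\<^sup>2"
    using assms by (intro mult_right_mono) auto
  finally show ?thesis .
next
  case False
  then have "r powr s \<le> r\<^sup>2"
    using assms powr_mono'[of 2 s r] by simp
  then show ?thesis
    using zero_le_power2[of r] by linarith
qed

text \<open>The convolution estimate rests on \<open>(1 + (j + m)\<^sup>2) \<le> 2 (1 + j\<^sup>2) + 2 (1 + m\<^sup>2)\<close>.\<close>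

lemma sobolev_weight_conv_le:
  assumes "2 \<le> s" and "s \<le> 3"
  shows "sobolev_weight s (j + m) / (sobolev_weight s j * sobolev_weight s m)
      \<le> 16 * (1 / (1 + (of_int j)\<^sup>2)\<^sup>2 + 1 / (1 + (of_int m)\<^sup>2)\<^sup>2)"
proof -
  define X :: real where "X = 1 + (of_int j)\<^sup>2"
  define Y :: real where "Y = 1 + (of_int m)\<^sup>2"
  define r where "r = (1 + (of_int (j + m))\<^sup>2) / (X * Y)"
  have X: "1 \<le> X" and Y: "1 \<le> Y"
    by (simp_all add: X_def Y_def)
  have sq: "(of_int (j + m))\<^sup>2 \<le> 2 * (of_int j)\<^sup>2 + 2 * (of_int m :: real)\<^sup>2"
    using zero_le_power2[of "of_int j - of_int m :: real"] by (simp add: power2_eq_square algebra_simps)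
  have r_pos: "0 < r"
    using X Y by (simp add: r_def add_pos_nonneg)
  have "2 * (X * Y) = 2 + 2 * (of_int j)\<^sup>2 + 2 * (of_int m)\<^sup>2 + 2 * ((of_int j)\<^sup>2 * (of_int m)\<^sup>2)"
    by (simp add: X_def Y_def algebra_simps)
  moreover have "0 \<le> (of_int j)\<^sup>2 * (of_int m :: real)\<^sup>2"
    by simp
  ultimately have "1 + (of_int (j + m))\<^sup>2 \<le> 2 * (X * Y)"
    using sq by linarith
  then have "r \<le> 2"
    using X Y by (simp add: r_def divide_le_eq mult.commute)
  then have "r powr s \<le> 2 * r\<^sup>2"
    using r_pos assms by (intro powr_le_twice_square)
  also have "\<dots> \<le> 2 * (2 / X + 2 / Y)\<^sup>2"
  proof -
    have "r \<le> (2 * X + 2 * Y) / (X * Y)"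
      using sq X Y unfolding r_def X_def Y_def by (intro divide_right_mono) auto
    also have "\<dots> = 2 / X + 2 / Y"
      using X Y by (simp add: field_simps)
    finally show ?thesis
      using r_pos by (intro mult_left_mono power_mono) auto
  qed
  also have "\<dots> \<le> 16 * (1 / X\<^sup>2 + 1 / Y\<^sup>2)"
    using zero_le_power2[of "1 / X - 1 / Y"] by (simp add: power2_eq_square algebra_simps)
  finally show ?thesis
    using X Y by (simp add: r_def X_def Y_def sobolev_weight_def powr_divide powr_mult add_pos_nonneg)
qed

lemma sum_sobolev_weight_ratio_le:
  assumes "2 \<le> s" and "s \<le> 3"
  shows "(\<Sum>j = - int N..int N. if k - j \<in> {- int N..int N}
            then sobolev_weight s k / (sobolev_weight s j * sobolev_weight s (k - j)) else 0) \<le> 64"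
proof -
  define R where "R = {- int N..int N}"
  define x where "x m = (if m \<in> R then 1 / (1 + (of_int m)\<^sup>2)\<^sup>2 else 0 :: real)" for m
  have x: "0 \<le> x m" for m
    by (simp add: x_def)
  have sum_x: "(\<Sum>m\<in>R. x m) \<le> 2"
    using sum_inverse_sq_weight_le_two[of N] by (simp add: x_def R_def)
  have "(\<Sum>j\<in>R. if k - j \<in> R
          then sobolev_weight s k / (sobolev_weight s j * sobolev_weight s (k - j)) else 0)
      \<le> (\<Sum>j\<in>R. 16 * (x j + x (k - j)))"
  proof (intro sum_mono)
    fix j
    assume "j \<in> R"
    then show "(if k - j \<in> R
          then sobolev_weight s k / (sobolev_weight s j * sobolev_weight s (k - j)) else 0)
        \<le> 16 * (x j + x (k - j))"
      using sobolev_weight_conv_le[OF assms, of j "k - j"] x[of j] x[of "k - j"] by (auto simp: x_def)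
  qed
  also have "\<dots> = 16 * ((\<Sum>j\<in>R. x j) + (\<Sum>j\<in>R. x (k - j)))"
    by (simp add: sum.distrib sum_distrib_left)
  also have "\<dots> \<le> 16 * (2 + 2)"
  proof -
    have "(\<Sum>j\<in>R. x (k - j)) \<le> (\<Sum>m\<in>R. x m)"
      using x by (intro sum_shift_le) (auto simp: R_def x_def inj_on_def)
    then show ?thesis
      using sum_x by simp
  qed
  finally show ?thesis
    by (simp add: R_def)
qed

lemma sobolev_weight_conv_pointwise_le:
  assumes b: "band_limited N b" and s: "2 \<le> s" "s \<le> 3"
  shows "sobolev_weight s k * (cmod (conv N a b k))\<^sup>2
      \<le> 64 * (\<Sum>j = - int N..int N. (sobolev_weight s j * (cmod (a j))\<^sup>2)
                 * (sobolev_weight s (k - j) * (cmod (b (k - j)))\<^sup>2))"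
proof -
  define R where "R = {- int N..int N}"
  define w where "w = sobolev_weight s"
  define A where "A j = sqrt (w j) * cmod (a j)" for j
  define B where "B j = sqrt (w j) * cmod (b j)" for j
  define \<rho> where "\<rho> j = (if k - j \<in> R then sqrt (w k / (w j * w (k - j))) else 0)" for j
  have w: "0 < w j" for j
    by (simp add: w_def sobolev_weight_pos)
  have sqrt_w: "(sqrt (w j))\<^sup>2 = w j" for j
    using w[of j] by simp
  have "b (k - j) = 0" if "k - j \<notin> R" for j
    using b that by (auto simp: R_def band_limited_def)
  then have summand: "sqrt (w k) * (cmod (a j) * cmod (b (k - j))) = A j * B (k - j) * \<rho> j" for j
    using w[of j] w[of "k - j"] w[of k]
    by (cases "k - j \<in> R") (simp_all add: A_def B_def \<rho>_def real_sqrt_mult real_sqrt_divide field_simps)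
  have "sqrt (w k) * cmod (conv N a b k) \<le> sqrt (w k) * (\<Sum>j\<in>R. cmod (a j) * cmod (b (k - j)))"
    unfolding conv_def R_def[symmetric]
    using w[of k] by (intro mult_left_mono order_trans[OF norm_sum]) (auto simp: norm_mult)
  also have "\<dots> = (\<Sum>j\<in>R. A j * B (k - j) * \<rho> j)"
    by (simp add: sum_distrib_left summand)
  finally have "sqrt (w k) * cmod (conv N a b k) \<le> (\<Sum>j\<in>R. A j * B (k - j) * \<rho> j)" .
  moreover have "0 \<le> sqrt (w k) * cmod (conv N a b k)"
    using w[of k] by simp
  ultimately have "(sqrt (w k) * cmod (conv N a b k))\<^sup>2 \<le> (\<Sum>j\<in>R. A j * B (k - j) * \<rho> j)\<^sup>2"
    by (intro power_mono)
  also have "\<dots> \<le> (\<Sum>j\<in>R. (A j * B (k - j))\<^sup>2) * (\<Sum>j\<in>R. (\<rho> j)\<^sup>2)"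
    by (rule Cauchy_Schwarz_ineq_sum)
  also have "\<dots> \<le> (\<Sum>j\<in>R. (A j * B (k - j))\<^sup>2) * 64"
  proof (intro mult_left_mono sum_nonneg)
    have "(\<Sum>j\<in>R. (\<rho> j)\<^sup>2) = (\<Sum>j = - int N..int N. if k - j \<in> {- int N..int N}
        then sobolev_weight s k / (sobolev_weight s j * sobolev_weight s (k - j)) else 0)"
      unfolding R_def \<rho>_def w_def
      by (intro sum.cong) (auto simp: less_imp_le[OF sobolev_weight_pos])
    then show "(\<Sum>j\<in>R. (\<rho> j)\<^sup>2) \<le> 64"
      using sum_sobolev_weight_ratio_le[OF s, of k N] by simp
  qed auto
  finally show ?thesis
    unfolding A_def B_def R_def power_mult_distrib sqrt_w
    by (simp add: w_def sum_distrib_left mult.commute)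
qed

lemma coeff_norm_conv_le:
  assumes "band_limited N a" and "band_limited N b" and "2 \<le> s" and "s \<le> 3"
  shows "coeff_norm s N (conv N a b) \<le> 8 * coeff_norm s N a * coeff_norm s N b"
proof -
  define R where "R = {- int N..int N}"
  define A where "A j = sobolev_weight s j * (cmod (a j))\<^sup>2" for j
  define B where "B j = sobolev_weight s j * (cmod (b j))\<^sup>2" for j
  have "(coeff_norm s N (conv N a b))\<^sup>2 \<le> (\<Sum>k\<in>R. 64 * (\<Sum>j\<in>R. A j * B (k - j)))"
    unfolding coeff_norm_sq R_def A_def B_def
    by (rule sum_mono) (rule sobolev_weight_conv_pointwise_le[OF assms(2-4)])
  also have "\<dots> = 64 * (\<Sum>k\<in>R. \<Sum>j\<in>R. A j * B (k - j))"
    by (simp add: sum_distrib_left)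
  also have "\<dots> \<le> 64 * ((\<Sum>j\<in>R. A j) * (\<Sum>m\<in>R. B m))"
  proof (intro mult_left_mono sum_conv_le)
    show "B m = 0" if "m \<notin> R" for m
      using assms(2) that by (auto simp: B_def R_def band_limited_def)
  qed (auto simp: R_def A_def B_def less_imp_le[OF sobolev_weight_pos])
  also have "\<dots> = (8 * coeff_norm s N a * coeff_norm s N b)\<^sup>2"
    unfolding power_mult_distrib coeff_norm_sq R_def A_def B_def by simp
  finally show ?thesis
    by (rule power2_le_imp_le) (simp add: coeff_norm_nonneg)
qed

lemma coeff_norm_0_conv_le:
  assumes "band_limited N g"
  shows "coeff_norm 0 N (conv N u g) \<le> (\<Sum>m = - int N..int N. cmod (g m)) * coeff_norm 0 N u"
proof -
  define R where "R = {- int N..int N}"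
  define G where "G = (\<Sum>m\<in>R. cmod (g m))"
  have g0: "cmod (g m) = 0" if "m \<notin> R" for m
    using assms that by (auto simp: R_def band_limited_def)
  have "(cmod (conv N u g k))\<^sup>2 \<le> G * (\<Sum>j\<in>R. (cmod (u j))\<^sup>2 * cmod (g (k - j)))" for k
  proof -
    have "cmod (conv N u g k)
        \<le> (\<Sum>j\<in>R. (cmod (u j) * sqrt (cmod (g (k - j)))) * sqrt (cmod (g (k - j))))"
      unfolding conv_def R_def[symmetric]
      by (rule order_trans[OF norm_sum]) (simp add: norm_mult mult.assoc)
    then have "(cmod (conv N u g k))\<^sup>2
        \<le> (\<Sum>j\<in>R. (cmod (u j) * sqrt (cmod (g (k - j)))) * sqrt (cmod (g (k - j))))\<^sup>2"
      by (rule power_mono) simp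
    also have "\<dots> \<le> (\<Sum>j\<in>R. (cmod (u j))\<^sup>2 * cmod (g (k - j))) * (\<Sum>j\<in>R. cmod (g (k - j)))"
      using Cauchy_Schwarz_ineq_sum[of "\<lambda>j. cmod (u j) * sqrt (cmod (g (k - j)))"
          "\<lambda>j. sqrt (cmod (g (k - j)))" R]
      by (simp add: power_mult_distrib)
    also have "\<dots> \<le> (\<Sum>j\<in>R. (cmod (u j))\<^sup>2 * cmod (g (k - j))) * G"
      unfolding G_def
      by (intro mult_left_mono sum_shift_le sum_nonneg) (simp_all add: R_def g0 inj_on_def)
    finally show ?thesis
      by (simp add: mult.commute)
  qed
  then have "(coeff_norm 0 N (conv N u g))\<^sup>2 \<le> G * (\<Sum>k\<in>R. \<Sum>j\<in>R. (cmod (u j))\<^sup>2 * cmod (g (k - j)))"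
    unfolding coeff_norm_sq R_def[symmetric] sum_distrib_left by (simp add: sum_mono)
  also have "\<dots> \<le> G * ((\<Sum>j\<in>R. (cmod (u j))\<^sup>2) * G)"
    unfolding G_def by (intro mult_left_mono sum_conv_le sum_nonneg) (simp_all add: R_def g0)
  also have "\<dots> = (G * coeff_norm 0 N u)\<^sup>2"
    unfolding power_mult_distrib coeff_norm_sq by (simp add: power2_eq_square R_def)
  finally show ?thesis
    unfolding G_def R_def
    by (rule power2_le_imp_le) (simp add: coeff_norm_nonneg sum_nonneg)
qed

lemma sum_norm_le_coeff_norm:
  assumes "2 \<le> s"
  shows "(\<Sum>m = - int N..int N. cmod (g m))\<^sup>2 \<le> 2 * (coeff_norm s N g)\<^sup>2"
proof -
  define R where "R = {- int N..int N}"
  define w where "w = sobolev_weight s"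
  have w: "0 < w m" for m
    by (simp add: w_def sobolev_weight_pos)
  have inv_w: "1 / w m \<le> 1 / (1 + (of_int m)\<^sup>2)\<^sup>2" for m
  proof -
    have "0 < 1 + (of_int m :: real)\<^sup>2"
      by (intro add_pos_nonneg) auto
    moreover have "(1 + (of_int m :: real)\<^sup>2) powr 2 \<le> w m"
      unfolding w_def sobolev_weight_def using assms by (intro powr_mono) auto
    ultimately show ?thesis
      using w[of m] by (intro divide_left_mono) auto
  qed
  have "(\<Sum>m\<in>R. cmod (g m))\<^sup>2 = (\<Sum>m\<in>R. (1 / sqrt (w m)) * (sqrt (w m) * cmod (g m)))\<^sup>2"
    using w by (simp add: less_imp_le less_imp_neq[symmetric])
  also have "\<dots> \<le> (\<Sum>m\<in>R. (1 / sqrt (w m))\<^sup>2) * (\<Sum>m\<in>R. (sqrt (w m) * cmod (g m))\<^sup>2)"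
    by (rule Cauchy_Schwarz_ineq_sum)
  also have "\<dots> = (\<Sum>m\<in>R. 1 / w m) * (coeff_norm s N g)\<^sup>2"
    unfolding coeff_norm_sq
    using w by (simp add: power_mult_distrib power_divide less_imp_le R_def w_def)
  also have "\<dots> \<le> 2 * (coeff_norm s N g)\<^sup>2"
  proof (rule mult_right_mono)
    show "(\<Sum>m\<in>R. 1 / w m) \<le> 2"
      using sum_mono[of R "\<lambda>m. 1 / w m", OF inv_w] sum_inverse_sq_weight_le_two[of N]
      unfolding R_def by linarith
  qed simp
  finally show ?thesis
    unfolding R_def .
qed

section \<open>The fixed-point iteration on Fourier coefficients\<close>

text \<open>The new iterate \<open>Z\<close> solves
  \<open>Z\<^sub>k (1 - i \<sigma>\<^sub>k) = U\<^sub>k (1 + i \<sigma>\<^sub>k) - i \<tau> k (a * a)\<^sub>k\<close> with \<open>a = (U + V) / 2\<close>;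
  for the scheme \<open>\<tau> = 3 \<Delta>t\<close> and \<open>\<sigma>\<^sub>k = \<epsilon>\<^sup>2 \<Delta>t k |k|\<^sup>\<alpha> / 2\<close>.\<close>

definition picard_step ::
    "real \<Rightarrow> (int \<Rightarrow> real) \<Rightarrow> nat \<Rightarrow> (int \<Rightarrow> complex) \<Rightarrow> (int \<Rightarrow> complex) \<Rightarrow> int \<Rightarrow> complex" where
  "picard_step \<tau> \<sigma> N U V k =
     (if \<bar>k\<bar> \<le> int N then
        (U k * (1 + \<i> * of_real (\<sigma> k))
          - \<i> * of_real \<tau> * of_int k * conv N (\<lambda>j. (U j + V j) / 2) (\<lambda>j. (U j + V j) / 2) k)
        / (1 - \<i> * of_real (\<sigma> k))
      else 0)"

lemma cmod_one_plus_i_real: "cmod (1 + \<i> * of_real t) = cmod (1 - \<i> * of_real t)"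
  by (simp add: cmod_def)

lemma one_le_cmod_one_minus_i_real: "1 \<le> cmod (1 - \<i> * of_real t)"
  by (simp add: cmod_def)

lemma picard_step_iff:
  assumes "\<bar>k\<bar> \<le> int N"
  shows "z = U k - \<i> * of_real \<tau> * of_int k * conv N (\<lambda>j. (U j + V j) / 2) (\<lambda>j. (U j + V j) / 2) k
              + \<i> * of_real (\<sigma> k) * (U k + z)
     \<longleftrightarrow> z = picard_step \<tau> \<sigma> N U V k"
proof -
  have "1 - \<i> * of_real (\<sigma> k) \<noteq> 0"
    using one_le_cmod_one_minus_i_real[of "\<sigma> k"] by auto
  then show ?thesis
    using assms by (auto simp: picard_step_def field_simps)
qed

lemma band_limited_picard_step: "band_limited N (picard_step \<tau> \<sigma> N U V)"
  by (simp add: band_limited_def picard_step_def)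

lemma norm_picard_step_le:
  assumes "0 \<le> \<tau>"
  shows "cmod (picard_step \<tau> \<sigma> N U V k)
      \<le> cmod (U k) + \<tau> * real N * cmod (conv N (\<lambda>j. (U j + V j) / 2) (\<lambda>j. (U j + V j) / 2) k)"
proof (cases "\<bar>k\<bar> \<le> int N")
  case True
  define C where "C = conv N (\<lambda>j. (U j + V j) / 2) (\<lambda>j. (U j + V j) / 2) k"
  define d where "d = cmod (1 - \<i> * of_real (\<sigma> k))"
  have d: "1 \<le> d"
    by (simp add: d_def one_le_cmod_one_minus_i_real)
  have "cmod (picard_step \<tau> \<sigma> N U V k) \<le> (cmod (U k) * d + \<tau> * \<bar>of_int k\<bar> * cmod C) / d"
    using True assms
      norm_triangle_ineq4[of "U k * (1 + \<i> * of_real (\<sigma> k))" "\<i> * of_real \<tau> * of_int k * C"]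
    by (simp add: picard_step_def norm_divide norm_mult cmod_one_plus_i_real C_def d_def
        divide_right_mono)
  also have "\<dots> \<le> cmod (U k) + \<tau> * \<bar>of_int k\<bar> * cmod C"
    using d assms mult_left_mono[OF d, of "\<tau> * \<bar>of_int k\<bar> * cmod C"]
    by (simp add: add_divide_distrib divide_le_eq)
  also have "\<dots> \<le> cmod (U k) + \<tau> * real N * cmod C"
    using True assms by (intro add_left_mono mult_right_mono mult_left_mono) auto
  finally show ?thesis
    unfolding C_def .
qed (use assms in \<open>simp add: picard_step_def\<close>)

lemma norm_picard_step_diff_le:
  assumes "0 \<le> \<tau>"
  shows "cmod (picard_step \<tau> \<sigma> N U V k - picard_step \<tau> \<sigma> N U V' k)
      \<le> \<tau> * real N * cmod (conv N (\<lambda>j. (U j + V j) / 2) (\<lambda>j. (U j + V j) / 2) k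
                           - conv N (\<lambda>j. (U j + V' j) / 2) (\<lambda>j. (U j + V' j) / 2) k)"
proof (cases "\<bar>k\<bar> \<le> int N")
  case True
  define D where "D = conv N (\<lambda>j. (U j + V j) / 2) (\<lambda>j. (U j + V j) / 2) k
                     - conv N (\<lambda>j. (U j + V' j) / 2) (\<lambda>j. (U j + V' j) / 2) k"
  define d where "d = cmod (1 - \<i> * of_real (\<sigma> k))"
  have d: "1 \<le> d"
    by (simp add: d_def one_le_cmod_one_minus_i_real)
  have "picard_step \<tau> \<sigma> N U V k - picard_step \<tau> \<sigma> N U V' k
      = - (\<i> * of_real \<tau> * of_int k * D) / (1 - \<i> * of_real (\<sigma> k))"
    using True by (simp add: picard_step_def D_def diff_divide_distrib[symmetric] algebra_simps)
  then have "cmod (picard_step \<tau> \<sigma> N U V k - picard_step \<tau> \<sigma> N U V' k) = \<tau> * \<bar>of_int k\<bar> * cmod D / d"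
    using assms by (simp add: norm_divide norm_mult d_def)
  also have "\<dots> \<le> \<tau> * \<bar>of_int k\<bar> * cmod D"
    using d assms mult_left_mono[OF d, of "\<tau> * \<bar>of_int k\<bar> * cmod D"] by (simp add: divide_le_eq)
  also have "\<dots> \<le> \<tau> * real N * cmod D"
    using True assms by (intro mult_right_mono mult_left_mono) auto
  finally show ?thesis
    unfolding D_def .
qed (use assms in \<open>simp add: picard_step_def\<close>)

lemma convergent_if_geometric_increments:
  fixes f :: "nat \<Rightarrow> complex"
  assumes "\<And>l. cmod (f (Suc l) - f l) \<le> C * q ^ l" and "0 \<le> q" and "q < 1"
  shows "convergent f"
proof -
  have "summable (\<lambda>l. f (Suc l) - f l)"
    by (rule summable_comparison_test[of _ "\<lambda>l. C * q ^ l"])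
       (use assms in \<open>auto intro!: summable_mult summable_geometric\<close>)
  then have "(\<lambda>n. f 0 + (\<Sum>l<n. f (Suc l) - f l)) \<longlonglongrightarrow> f 0 + (\<Sum>l. f (Suc l) - f l)"
    by (intro tendsto_intros summable_LIMSEQ)
  moreover have "(\<lambda>n. f 0 + (\<Sum>l<n. f (Suc l) - f l)) = f"
    by (simp add: sum_lessThan_telescope)
  ultimately show ?thesis
    unfolding convergent_def by auto
qed

lemma tendsto_picard_step:
  assumes "\<And>j. (\<lambda>l. V l j) \<longlonglongrightarrow> W j"
  shows "(\<lambda>l. picard_step \<tau> \<sigma> N U (V l) k) \<longlonglongrightarrow> picard_step \<tau> \<sigma> N U W k"
proof (cases "\<bar>k\<bar> \<le> int N")
  case True
  have "1 - \<i> * of_real (\<sigma> k) \<noteq> 0"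
    using one_le_cmod_one_minus_i_real[of "\<sigma> k"] by auto
  then show ?thesis
    using True unfolding picard_step_def conv_def by (simp, intro tendsto_intros assms) auto
qed (simp add: picard_step_def)

lemma eta_ge_8:
  fixes \<zeta> \<eta> :: real
  assumes "0 < \<zeta>" and "\<zeta> < 1" and "\<eta> = (8 - \<zeta>) / (1 - \<zeta>)"
  shows "8 \<le> \<eta>"
  using assms by (simp add: le_divide_eq)

lemma zeta_one_plus_eta_sq_le:
  fixes \<zeta> \<eta> :: real
  assumes "0 < \<zeta>" and "\<zeta> < 1" and "\<eta> = (8 - \<zeta>) / (1 - \<zeta>)"
  shows "\<zeta> * (1 + \<eta>)\<^sup>2 \<le> \<eta> * (\<eta> - 1)"
proof -
  have pos: "0 < 1 - \<zeta>"
    using assms by simp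
  have "(8 - \<zeta>) * 7 - \<zeta> * (9 - 2 * \<zeta>)\<^sup>2 = 4 * ((1 - \<zeta>) * ((\<zeta> - 4)\<^sup>2 - 2))"
    by (simp add: power2_eq_square algebra_simps)
  moreover have "3\<^sup>2 \<le> (4 - \<zeta>)\<^sup>2"
    using assms by (intro power_mono) auto
  then have "2 \<le> (\<zeta> - 4)\<^sup>2"
    by (simp add: power2_commute)
  ultimately have "\<zeta> * (9 - 2 * \<zeta>)\<^sup>2 \<le> (8 - \<zeta>) * 7"
    using pos by (smt (verit) mult_nonneg_nonneg)
  then have "\<zeta> * (9 - 2 * \<zeta>)\<^sup>2 / (1 - \<zeta>)\<^sup>2 \<le> (8 - \<zeta>) * 7 / (1 - \<zeta>)\<^sup>2"
    by (intro divide_right_mono) auto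
  moreover have "1 + \<eta> = (9 - 2 * \<zeta>) / (1 - \<zeta>)" and "\<eta> - 1 = 7 / (1 - \<zeta>)"
    using pos assms(3) by (simp_all add: field_simps)
  ultimately show ?thesis
    using assms(3) by (simp add: power_divide power2_eq_square)
qed

locale picard_setting =
  fixes s \<tau> :: real and \<sigma> :: "int \<Rightarrow> real" and N :: nat and U :: "int \<Rightarrow> complex" and \<zeta> \<eta> :: real
  assumes s: "2 \<le> s" "s \<le> 3" and \<tau>: "0 \<le> \<tau>" and U: "band_limited N U"
    and \<zeta>: "0 < \<zeta>" "\<zeta> < 1" and \<eta>: "\<eta> = (8 - \<zeta>) / (1 - \<zeta>)"
    and cfl: "2 * \<tau> * real N * (\<eta> * coeff_norm s N U) \<le> \<zeta>"
begin

abbreviation "M \<equiv> coeff_norm s N U"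

lemma coeff_norm_midpoint_le:
  assumes "coeff_norm s N V \<le> \<eta> * M"
  shows "coeff_norm s N (\<lambda>j. (U j + V j) / 2) \<le> (1 + \<eta>) * M / 2"
proof -
  have "coeff_norm s N (\<lambda>j. (U j + V j) / 2) \<le> 1 / 2 * M + 1 / 2 * coeff_norm s N V"
    by (rule coeff_norm_le_lincomb) (auto simp: norm_divide intro: order_trans[OF norm_triangle_ineq])
  then show ?thesis
    using assms by (simp add: algebra_simps)
qed

lemma picard_step_maps_ball:
  assumes "band_limited N V" and "coeff_norm s N V \<le> \<eta> * M"
  shows "coeff_norm s N (picard_step \<tau> \<sigma> N U V) \<le> \<eta> * M"
proof -
  define a where "a = (\<lambda>j. (U j + V j) / 2)"
  have a: "band_limited N a"
    using U assms(1) by (simp add: band_limited_def a_def)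
  have \<eta>8: "8 \<le> \<eta>" and M: "0 \<le> M"
    using eta_ge_8[OF \<zeta> \<eta>] coeff_norm_nonneg by auto
  have "coeff_norm s N (picard_step \<tau> \<sigma> N U V) \<le> 1 * M + (\<tau> * real N) * coeff_norm s N (conv N a a)"
    using norm_picard_step_le[OF \<tau>] \<tau> by (intro coeff_norm_le_lincomb) (auto simp: a_def)
  also have "\<dots> \<le> M + (\<tau> * real N) * (8 * ((1 + \<eta>) * M / 2)\<^sup>2)"
  proof -
    have "coeff_norm s N (conv N a a) \<le> 8 * coeff_norm s N a * coeff_norm s N a"
      using coeff_norm_conv_le[OF a a s] .
    also have "\<dots> \<le> 8 * ((1 + \<eta>) * M / 2)\<^sup>2"
    proof -
      have "(coeff_norm s N a)\<^sup>2 \<le> ((1 + \<eta>) * M / 2)\<^sup>2"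
        using coeff_norm_midpoint_le[OF assms(2)] coeff_norm_nonneg[of s N a]
        by (intro power_mono) (simp_all add: a_def)
      then show ?thesis
        by (simp add: power2_eq_square mult_ac)
    qed
    finally show ?thesis
      using \<tau> by (simp add: mult_left_mono)
  qed
  also have "\<dots> = M + (2 * \<tau> * real N * (\<eta> * M)) * ((1 + \<eta>)\<^sup>2 * M / \<eta>)"
    using \<eta>8 by (simp add: power2_eq_square field_simps)
  also have "\<dots> \<le> M + (\<zeta> * (1 + \<eta>)\<^sup>2) * M / \<eta>"
    using mult_right_mono[OF cfl, of "(1 + \<eta>)\<^sup>2 * M / \<eta>"] M \<eta>8 by simp
  also have "\<dots> \<le> M + (\<eta> * (\<eta> - 1)) * M / \<eta>"
    using zeta_one_plus_eta_sq_le[OF \<zeta> \<eta>] M \<eta>8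
    by (intro add_left_mono divide_right_mono mult_right_mono) auto
  also have "\<dots> = \<eta> * M"
    using \<eta>8 by (simp add: field_simps)
  finally show ?thesis .
qed

lemma step_size_times_sum_norm_le_1:
  assumes "coeff_norm s N g \<le> (1 + \<eta>) * M"
  shows "\<tau> * real N * (\<Sum>m = - int N..int N. cmod (g m)) \<le> 1"
proof -
  define L where "L = (\<Sum>m = - int N..int N. cmod (g m))"
  have \<eta>8: "8 \<le> \<eta>" and M: "0 \<le> M"
    using eta_ge_8[OF \<zeta> \<eta>] coeff_norm_nonneg by auto
  have "L\<^sup>2 \<le> 2 * ((1 + \<eta>) * M)\<^sup>2"
    using sum_norm_le_coeff_norm[OF s(1), where N = N and g = g] coeff_norm_nonneg[of s N g] assms
    unfolding L_def by (smt (verit) power_mono)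
  then have "(\<tau> * real N)\<^sup>2 * L\<^sup>2 \<le> (\<tau> * real N)\<^sup>2 * (2 * ((1 + \<eta>) * M)\<^sup>2)"
    by (rule mult_left_mono) simp
  then have "(\<tau> * real N * L)\<^sup>2 \<le> 2 * (\<tau> * real N * ((1 + \<eta>) * M))\<^sup>2"
    by (simp add: power_mult_distrib mult_ac)
  also have "\<dots> \<le> 2 * (9 / 16)\<^sup>2"
  proof -
    have "(\<tau> * real N * M) * (1 + \<eta>) \<le> (\<tau> * real N * M) * (9 / 8 * \<eta>)"
      using \<eta>8 M \<tau> by (intro mult_left_mono) auto
    then have "\<tau> * real N * ((1 + \<eta>) * M) \<le> 9 / 16 * (2 * \<tau> * real N * (\<eta> * M))"
      by (simp add: algebra_simps)
    also have "\<dots> \<le> 9 / 16"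
      using cfl \<zeta> by linarith
    finally show ?thesis
      using \<tau> M \<eta>8 by (intro mult_left_mono power_mono) auto
  qed
  also have "\<dots> \<le> 1"
    by (simp add: power2_eq_square)
  finally show ?thesis
    using power2_le_imp_le[of "\<tau> * real N * L" 1] by (simp add: L_def)
qed

lemma picard_step_contraction:
  assumes V: "band_limited N V" "coeff_norm s N V \<le> \<eta> * M"
    and V': "band_limited N V'" "coeff_norm s N V' \<le> \<eta> * M"
  shows "coeff_norm 0 N (\<lambda>k. picard_step \<tau> \<sigma> N U V k - picard_step \<tau> \<sigma> N U V' k)
      \<le> 1 / 2 * coeff_norm 0 N (\<lambda>k. V k - V' k)"
proof -
  define a where "a = (\<lambda>j. (U j + V j) / 2)"
  define a' where "a' = (\<lambda>j. (U j + V' j) / 2)"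
  define g where "g = (\<lambda>j. a j + a' j)"
  have band: "band_limited N a" "band_limited N a'" "band_limited N g"
    using U V(1) V'(1) by (simp_all add: band_limited_def a_def a'_def g_def)
  have "coeff_norm s N g \<le> 1 * coeff_norm s N a + 1 * coeff_norm s N a'"
    by (rule coeff_norm_le_lincomb) (simp_all add: g_def norm_triangle_ineq)
  also have "\<dots> \<le> (1 + \<eta>) * M"
    using coeff_norm_midpoint_le[OF V(2)] coeff_norm_midpoint_le[OF V'(2)] by (simp add: a_def a'_def)
  finally have small: "\<tau> * real N * (\<Sum>m = - int N..int N. cmod (g m)) \<le> 1"
    by (rule step_size_times_sum_norm_le_1)
  have "coeff_norm 0 N (\<lambda>k. picard_step \<tau> \<sigma> N U V k - picard_step \<tau> \<sigma> N U V' k)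
      \<le> 0 * coeff_norm 0 N a + (\<tau> * real N) * coeff_norm 0 N (conv N (\<lambda>j. a j - a' j) g)"
  proof (rule coeff_norm_le_lincomb)
    fix k
    show "cmod (picard_step \<tau> \<sigma> N U V k - picard_step \<tau> \<sigma> N U V' k)
        \<le> 0 * cmod (a k) + \<tau> * real N * cmod (conv N (\<lambda>j. a j - a' j) g k)"
      using norm_picard_step_diff_le[OF \<tau>, where \<sigma> = \<sigma> and N = N and U = U and V = V and V' = V'
          and k = k]
      unfolding a_def[symmetric] a'_def[symmetric] conv_diff_square[OF band(1,2)] g_def by simp
  qed (use \<tau> in simp_all)
  also have "\<dots> \<le> (\<tau> * real N) * ((\<Sum>m = - int N..int N. cmod (g m)) * coeff_norm 0 N (\<lambda>j. a j - a' j))"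
    using coeff_norm_0_conv_le[OF band(3)] \<tau> by (simp add: mult_left_mono)
  also have "\<dots> \<le> coeff_norm 0 N (\<lambda>j. a j - a' j)"
    using mult_right_mono[OF small coeff_norm_nonneg] by (simp add: mult.assoc)
  also have "\<dots> \<le> 1 / 2 * coeff_norm 0 N (\<lambda>k. V k - V' k) + 0 * coeff_norm 0 N U"
    by (rule coeff_norm_le_lincomb)
       (simp_all add: a_def a'_def norm_divide diff_divide_distrib[symmetric])
  finally show ?thesis
    by simp
qed

lemma picard_iterates_in_ball:
  assumes "V 0 = U" and "\<And>l. V (Suc l) = picard_step \<tau> \<sigma> N U (V l)"
  shows "band_limited N (V l) \<and> coeff_norm s N (V l) \<le> \<eta> * M"
proof (induction l)
  case 0
  have "1 * M \<le> \<eta> * M"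
    using eta_ge_8[OF \<zeta> \<eta>] coeff_norm_nonneg by (intro mult_right_mono) auto
  then show ?case
    using U assms(1) by simp
next
  case (Suc l)
  then show ?case
    using picard_step_maps_ball band_limited_picard_step assms(2) by simp
qed

lemma picard_increments_geometric:
  assumes "V 0 = U" and "\<And>l. V (Suc l) = picard_step \<tau> \<sigma> N U (V l)"
  shows "coeff_norm 0 N (\<lambda>k. V (Suc l) k - V l k) \<le> coeff_norm 0 N (\<lambda>k. V 1 k - V 0 k) * (1 / 2) ^ l"
proof (induction l)
  case (Suc l)
  note ball = picard_iterates_in_ball[OF assms]
  have "coeff_norm 0 N (\<lambda>k. picard_step \<tau> \<sigma> N U (V (Suc l)) k - picard_step \<tau> \<sigma> N U (V l) k)
      \<le> 1 / 2 * coeff_norm 0 N (\<lambda>k. V (Suc l) k - V l k)"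
    using ball[of l] ball[of "Suc l"] by (intro picard_step_contraction) auto
  then have "coeff_norm 0 N (\<lambda>k. V (Suc (Suc l)) k - V (Suc l) k)
      \<le> 1 / 2 * coeff_norm 0 N (\<lambda>k. V (Suc l) k - V l k)"
    by (simp only: assms(2)[symmetric])
  then show ?case
    using Suc.IH by simp
qed simp

lemma picard_iterates_convergent:
  assumes "V 0 = U" and "\<And>l. V (Suc l) = picard_step \<tau> \<sigma> N U (V l)"
  shows "convergent (\<lambda>l. V l k)"
proof (rule convergent_if_geometric_increments)
  define D where "D = coeff_norm 0 N (\<lambda>k. V 1 k - V 0 k)"
  show "cmod (V (Suc l) k - V l k) \<le> D * (1 / 2) ^ l" for l
  proof (cases "\<bar>k\<bar> \<le> int N")
    case True
    then show ?thesis
      using norm_le_coeff_norm_0[OF True, of "\<lambda>k. V (Suc l) k - V l k"]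
        picard_increments_geometric[OF assms, of l]
      by (simp add: D_def)
  next
    case False
    then have "V (Suc l) k = 0" and "V l k = 0"
      using picard_iterates_in_ball[OF assms] by (simp_all add: band_limited_def)
    moreover have "0 \<le> D"
      unfolding D_def by (rule coeff_norm_nonneg)
    ultimately show ?thesis
      by simp
  qed
qed auto

lemma picard_iteration_converges:
  assumes "V 0 = U" and "\<And>l. V (Suc l) = picard_step \<tau> \<sigma> N U (V l)"
  shows "\<exists>W. (\<forall>k. (\<lambda>l. V l k) \<longlonglongrightarrow> W k) \<and> picard_step \<tau> \<sigma> N U W = W \<and> coeff_norm s N W \<le> \<eta> * M"
proof -
  define W where "W k = lim (\<lambda>l. V l k)" for k
  have VW: "(\<lambda>l. V l k) \<longlonglongrightarrow> W k" for k
    using picard_iterates_convergent[OF assms, of k] unfolding W_def by (simp add: convergent_LIMSEQ_iff)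
  have "picard_step \<tau> \<sigma> N U W k = W k" for k
  proof -
    have "(\<lambda>l. picard_step \<tau> \<sigma> N U (V l) k) \<longlonglongrightarrow> W k"
      using LIMSEQ_Suc[OF VW[of k]] by (simp only: assms(2))
    then show ?thesis
      by (rule LIMSEQ_unique[OF tendsto_picard_step[OF VW]])
  qed
  then have "picard_step \<tau> \<sigma> N U W = W"
    by (rule ext)
  moreover have "coeff_norm s N W \<le> \<eta> * M"
    by (rule LIMSEQ_le_const2[OF tendsto_coeff_norm[OF VW]])
       (use picard_iterates_in_ball[OF assms] in blast)
  ultimately show ?thesis
    using VW by blast
qed

end


section \<open>The iteration as a Galerkin scheme\<close>

lemma fcoef_limit_VN:
  assumes v: "\<And>l. v l \<in> VN N" and lim: "\<And>k. (\<lambda>l. fcoef (v l) k) \<longlonglongrightarrow> W k"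
  shows "hermitian W" and "band_limited N W"
proof -
  show "hermitian W"
    unfolding hermitian_def
  proof
    fix k
    have "(\<lambda>l. fcoef (v l) (- k)) \<longlonglongrightarrow> cnj (W k)"
      using tendsto_cnj[OF lim[of k]] hermitian_fcoef by (simp add: hermitian_def)
    then show "W (- k) = cnj (W k)"
      by (rule LIMSEQ_unique[OF lim])
  qed
  show "band_limited N W"
    unfolding band_limited_def
  proof (intro allI impI)
    fix k :: int
    assume "int N < \<bar>k\<bar>"
    then have "(\<lambda>l. fcoef (v l) k) \<longlonglongrightarrow> 0"
      using band_limited_fcoef_VN[OF v] by (simp add: band_limited_def)
    then show "W k = 0"
      by (rule LIMSEQ_unique[OF lim])
  qed
qed

lemma VN_limit_of_fcoef:
  assumes v: "\<And>l. v l \<in> VN N" and lim: "\<And>k. (\<lambda>l. fcoef (v l) k) \<longlonglongrightarrow> W k"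
  shows "\<exists>u\<in>VN N. fcoef u = W \<and> (\<lambda>l. sob_norm 0 (\<lambda>x. v l x - u x)) \<longlonglongrightarrow> 0"
proof -
  define u where "u x = Re (trig_poly N W x)" for x
  have repr: "of_real (u x) = trig_poly N W x" for x
    unfolding u_def by (rule trig_poly_real[OF fcoef_limit_VN(1)[OF v lim]])
  have u: "u \<in> VN N" and fcoef_u: "fcoef u = W"
    using VN_I[OF repr] fcoef_trig_poly_band_limited[OF repr fcoef_limit_VN(2)[OF v lim]] by auto
  have "sob_norm 0 (\<lambda>x. v l x - u x) = coeff_norm 0 N (\<lambda>k. fcoef (v l) k - W k)" for l
  proof -
    have "fcoef (\<lambda>x. v l x - u x) = (\<lambda>k. fcoef (v l) k - W k)"
      using continuous_on_VN[OF v] continuous_on_VN[OF u] by (simp add: fun_eq_iff fcoef_diff fcoef_u)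
    then show ?thesis
      by (simp add: sob_norm_VN[OF VN_diff[OF v u]])
  qed
  moreover have "(\<lambda>l. coeff_norm 0 N (\<lambda>k. fcoef (v l) k - W k)) \<longlonglongrightarrow> coeff_norm 0 N (\<lambda>k. W k - W k)"
    by (intro tendsto_coeff_norm tendsto_diff lim tendsto_const)
  ultimately show ?thesis
    using u fcoef_u by (auto simp: coeff_norm_def)
qed

lemma galerkin_scheme_iff_picard_step:
  assumes U: "U \<in> VN N" and a: "a \<in> VN N" and b: "b \<in> VN N" and w: "w \<in> VN N"
    and fcoef_a: "fcoef a = (\<lambda>j. (fcoef U j + fcoef u j) / 2)"
    and fcoef_b: "fcoef b = (\<lambda>j. of_real \<beta> * (fcoef U j + fcoef w j))"
    and \<sigma>: "\<And>k. \<sigma> k = \<kappa> * \<beta> * of_int k * \<bar>of_int k\<bar> powr \<alpha>"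
  shows "(\<forall>\<phi>\<in>VN N. l2inner w \<phi> = l2inner U \<phi> - 2 * \<tau> * l2inner (\<lambda>x. a x * deriv a x) \<phi>
                              + \<kappa> * l2inner (deriv (fracD \<alpha> b)) \<phi>)
     \<longleftrightarrow> fcoef w = picard_step \<tau> \<sigma> N (fcoef U) (fcoef u)"
proof -
  have eq_k: "fcoef U k - of_real (2 * \<tau>) * (\<i> * of_int k / 2 * conv N (fcoef a) (fcoef a) k)
          + of_real \<kappa> * (\<i> * of_int k * of_real (\<bar>of_int k\<bar> powr \<alpha>) * fcoef b k)
      = fcoef U k - \<i> * of_real \<tau> * of_int k
            * conv N (\<lambda>j. (fcoef U j + fcoef u j) / 2) (\<lambda>j. (fcoef U j + fcoef u j) / 2) k
          + \<i> * of_real (\<sigma> k) * (fcoef U k + fcoef w k)" for k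
    by (simp add: fcoef_a fcoef_b \<sigma> algebra_simps)
  have "(\<forall>\<phi>\<in>VN N. l2inner w \<phi> = l2inner U \<phi> - 2 * \<tau> * l2inner (\<lambda>x. a x * deriv a x) \<phi>
                              + \<kappa> * l2inner (deriv (fracD \<alpha> b)) \<phi>)
      \<longleftrightarrow> (\<forall>k. \<bar>k\<bar> \<le> int N \<longrightarrow> fcoef w k = fcoef U k
                - of_real (2 * \<tau>) * (\<i> * of_int k / 2 * conv N (fcoef a) (fcoef a) k)
                + of_real \<kappa> * (\<i> * of_int k * of_real (\<bar>of_int k\<bar> powr \<alpha>) * fcoef b k))"
    by (rule galerkin_scheme_iff_fcoef[OF U a b w])
  also have "\<dots> \<longleftrightarrow> (\<forall>k. \<bar>k\<bar> \<le> int N \<longrightarrow> fcoef w k = picard_step \<tau> \<sigma> N (fcoef U) (fcoef u) k)"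
    unfolding eq_k using picard_step_iff by blast
  also have "\<dots> \<longleftrightarrow> fcoef w = picard_step \<tau> \<sigma> N (fcoef U) (fcoef u)"
    using band_limited_fcoef_VN[OF w] band_limited_picard_step[of N \<tau> \<sigma> "fcoef U" "fcoef u"]
    unfolding band_limited_def fun_eq_iff by (metis not_le)
  finally show ?thesis .
qed

lemma galerkin_iterate_eq_picard_step:
  assumes U0: "U0 \<in> VN N" and u: "u \<in> VN N" and w: "w \<in> VN N"
    and galerkin: "\<forall>\<phi>\<in>VN N. l2inner w \<phi> = l2inner U0 \<phi> - dt * l2inner (Bop (\<lambda>x. (U0 x + u x) / 2)) \<phi>
                  + 1/2 * \<epsilon>\<^sup>2 * dt * l2inner (deriv (fracD \<alpha> (\<lambda>x. U0 x + w x))) \<phi>"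
  shows "fcoef w = picard_step (3 * dt) (\<lambda>k. \<epsilon>\<^sup>2 * dt / 2 * of_int k * \<bar>of_int k\<bar> powr \<alpha>) N
      (fcoef U0) (fcoef u)"
proof (rule galerkin_scheme_iff_picard_step[THEN iffD1])
  show "\<forall>\<phi>\<in>VN N. l2inner w \<phi> = l2inner U0 \<phi>
      - 2 * (3 * dt) * l2inner (\<lambda>x. (U0 x + u x) / 2 * deriv (\<lambda>x. (U0 x + u x) / 2) x) \<phi>
      + 1/2 * \<epsilon>\<^sup>2 * dt * l2inner (deriv (fracD \<alpha> (\<lambda>x. U0 x + w x))) \<phi>"
    using galerkin by (simp add: l2inner_Bop)
  show "fcoef (\<lambda>x. U0 x + w x) = (\<lambda>j. of_real 1 * (fcoef U0 j + fcoef w j))"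
    by (simp add: fcoef_add_VN[OF U0 w])
qed (simp_all add: U0 u w VN_add VN_divide fcoef_midpoint_VN[OF U0 u])

lemma galerkin_eq_if_picard_fixed_point:
  assumes U0: "U0 \<in> VN N" and U1: "U1 \<in> VN N"
    and fixed: "fcoef U1
      = picard_step (3 * dt) (\<lambda>k. \<epsilon>\<^sup>2 * dt / 2 * of_int k * \<bar>of_int k\<bar> powr \<alpha>) N (fcoef U0) (fcoef U1)"
  shows "\<forall>\<phi>\<in>VN N. l2inner U1 \<phi> = l2inner U0 \<phi>
      - 6 * dt * l2inner (\<lambda>x. (U0 x + U1 x) / 2 * deriv (\<lambda>y. (U0 y + U1 y) / 2) x) \<phi>
      + \<epsilon>\<^sup>2 * dt * l2inner (deriv (fracD \<alpha> (\<lambda>y. (U0 y + U1 y) / 2))) \<phi>"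
proof -
  have mid: "(\<lambda>y. (U0 y + U1 y) / 2) \<in> VN N"
    by (intro VN_divide VN_add U0 U1)
  have "fcoef (\<lambda>y. (U0 y + U1 y) / 2) = (\<lambda>j. of_real (1 / 2) * (fcoef U0 j + fcoef U1 j))"
    by (simp add: fcoef_midpoint_VN[OF U0 U1])
  from galerkin_scheme_iff_picard_step[OF U0 mid mid U1 fcoef_midpoint_VN[OF U0 U1] this,
      where \<tau> = "3 * dt" and \<kappa> = "\<epsilon>\<^sup>2 * dt" and \<alpha> = \<alpha>
        and \<sigma> = "\<lambda>k. \<epsilon>\<^sup>2 * dt / 2 * of_int k * \<bar>of_int k\<bar> powr \<alpha>"]
  show ?thesis
    using fixed by simp
qed

theorem lemma3p3:
  fixes \<alpha> \<epsilon> T dt \<zeta> \<eta> :: real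
    and N n :: nat
    and U0 :: "real \<Rightarrow> real"
    and v :: "nat \<Rightarrow> real \<Rightarrow> real"
  assumes alpha: "1 \<le> \<alpha>" "\<alpha> \<le> 2"
    and T: "T > 0" and dt: "dt > 0" and step: "real (n + 1) * dt \<le> T"
    and U0_VN: "U0 \<in> VN N"
    and v0: "v 0 = U0"
    and v_VN: "\<forall>l. v l \<in> VN N"
    and v_iter: "\<forall>l. \<forall>\<phi>\<in>VN N.
        l2inner (v (Suc l)) \<phi>
          = l2inner U0 \<phi>
            - dt * l2inner (Bop (\<lambda>x. (U0 x + v l x) / 2)) \<phi>
            + 1/2 * \<epsilon>\<^sup>2 * dt * l2inner (deriv (fracD \<alpha> (\<lambda>x. U0 x + v (Suc l) x))) \<phi>"
    and zeta: "0 < \<zeta>" "\<zeta> < 1"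
    and eta: "\<eta> = (8 - \<zeta>) / (1 - \<zeta>)"
    and cfl: "6 * real N * dt * (\<eta> * sob_norm (1 + \<alpha>) U0) \<le> \<zeta>"
  shows "\<exists>U1 \<in> VN N.
           (\<lambda>l. sob_norm 0 (\<lambda>x. v l x - U1 x)) \<longlonglongrightarrow> 0
         \<and> (\<forall>\<phi>\<in>VN N. l2inner U1 \<phi>
              = l2inner U0 \<phi>
                - 6 * dt * l2inner (\<lambda>x. (U0 x + U1 x) / 2 * deriv (\<lambda>y. (U0 y + U1 y) / 2) x) \<phi>
                + \<epsilon>\<^sup>2 * dt * l2inner (deriv (fracD \<alpha> (\<lambda>y. (U0 y + U1 y) / 2))) \<phi>)
         \<and> sob_norm (1 + \<alpha>) U1 \<le> \<eta> * sob_norm (1 + \<alpha>) U0"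
proof -
  \<comment> \<open>The time horizon \<open>T\<close> and the step index \<open>n\<close> play no role for a single step.\<close>
  define \<sigma> where "\<sigma> = (\<lambda>k::int. \<epsilon>\<^sup>2 * dt / 2 * of_int k * \<bar>of_int k\<bar> powr \<alpha>)"
  define V where "V l = fcoef (v l)" for l
  have V0: "V 0 = fcoef U0"
    by (simp add: V_def v0)
  have step: "V (Suc l) = picard_step (3 * dt) \<sigma> N (fcoef U0) (V l)" for l
    unfolding V_def \<sigma>_def
    by (rule galerkin_iterate_eq_picard_step[OF U0_VN v_VN[rule_format] v_VN[rule_format]
          spec[OF v_iter]])
  interpret picard_setting "1 + \<alpha>" "3 * dt" \<sigma> N "fcoef U0" \<zeta> \<eta>
    using alpha dt zeta eta cfl band_limited_fcoef_VN[OF U0_VN]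
    by unfold_locales (simp_all add: sob_norm_VN[OF U0_VN] algebra_simps)
  obtain W where VW: "\<forall>k. (\<lambda>l. V l k) \<longlonglongrightarrow> W k" and fixed: "picard_step (3 * dt) \<sigma> N (fcoef U0) W = W"
    and bound: "coeff_norm (1 + \<alpha>) N W \<le> \<eta> * coeff_norm (1 + \<alpha>) N (fcoef U0)"
    using picard_iteration_converges[OF V0 step] by blast
  obtain U1 where U1_VN: "U1 \<in> VN N" and fcoef_U1: "fcoef U1 = W"
    and conv: "(\<lambda>l. sob_norm 0 (\<lambda>x. v l x - U1 x)) \<longlonglongrightarrow> 0"
    using VN_limit_of_fcoef[where v = v and N = N and W = W] v_VN VW unfolding V_def by blast
  have "fcoef U1 = picard_step (3 * dt) \<sigma> N (fcoef U0) (fcoef U1)"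
    using fixed fcoef_U1 by simp
  note galerkin = galerkin_eq_if_picard_fixed_point[OF U0_VN U1_VN this[unfolded \<sigma>_def]]
  have "sob_norm (1 + \<alpha>) U1 \<le> \<eta> * sob_norm (1 + \<alpha>) U0"
    using bound by (simp add: sob_norm_VN[OF U1_VN] sob_norm_VN[OF U0_VN] fcoef_U1)
  then show ?thesis
    using U1_VN conv galerkin by blast
qed

end
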